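(* Let $A \in M_n(\mathbb{C})$. Then strong continuity of $f_A^{-1}$ fails at every point $z\in\partial F(A)$ that is an isolated, fully round, multiply generated boundary point.
   Context: For $A\in M_n(\mathbb{C})$, $f_A(x)=x^*Ax$ is defined on the unit sphere $\mathbb{C}S^n$ of $\mathbb{C}^n$ and $F(A)=f_A(\mathbb{C}S^n)$ is the numerical range. The multivalued inverse $f_A^{-1}$ is strongly continuous at $z\in F(A)$ if for every $x\in f_A^{-1}(z)$ and every neighborhood $V$ of $x$ in $\mathbb{C}S^n$, $f_A(V)$ contains a neighborhood of $z$ relative to $F(A)$. A point $z\in\partial F(A)$ is fully round if neither of its one-sided neighborhoods in $\partial F(A)$ is a line segment, for every sufficiently small size. A boundary point $z$ is multiply generated if $f_A^{-1}(z)$ is not contained in a one-dimensional subspace of $\mathbb{C}^n$; it is an isolated multiply generated boundary point if some neighborhood of $z$ contains no other multiply generated boundary points. *)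

theory Defs
  imports "HOL-Analysis.Analysis"
begin

definition qform :: "complex^'n^'n \<Rightarrow> complex^'n \<Rightarrow> complex" where
  "qform A x = (\<Sum>i\<in>UNIV. cnj (x $ i) * (A *v x) $ i)"

definition csphere :: "(complex^'n) set" where
  "csphere = sphere 0 1"

definition numrange :: "complex^'n^'n \<Rightarrow> complex set" where
  "numrange A = qform A ` csphere"

definition fibre :: "complex^'n^'n \<Rightarrow> complex \<Rightarrow> (complex^'n) set" where
  "fibre A z = {x \<in> csphere. qform A x = z}"

definition strongly_continuous_inv :: "complex^'n^'n \<Rightarrow> complex \<Rightarrow> bool" where
  "strongly_continuous_inv A z \<longleftrightarrow>
     (\<forall>x \<in> fibre A z. \<forall>V. open V \<and> x \<in> V \<longrightarrow>
        (\<exists>U. open U \<and> z \<in> U \<and> U \<inter> numrange A \<subseteq> qform A ` (V \<inter> csphere)))"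

text \<open>Multiply generated boundary point: the fibre is not contained in a complex
  one-dimensional subspace {c v | c \<in> \<complex>} (for v=0 this is {0}).\<close>
definition multiply_generated :: "complex^'n^'n \<Rightarrow> complex \<Rightarrow> bool" where
  "multiply_generated A z \<longleftrightarrow> z \<in> frontier (numrange A) \<and>
     \<not> (\<exists>v. fibre A z \<subseteq> range (\<lambda>c::complex. c *s v))"

definition isolated_multiply_generated :: "complex^'n^'n \<Rightarrow> complex \<Rightarrow> bool" where
  "isolated_multiply_generated A z \<longleftrightarrow> multiply_generated A z \<and>
     (\<exists>e>0. \<forall>w \<in> ball z e. w \<noteq> z \<longrightarrow> \<not> multiply_generated A w)"

text \<open>Fully round boundary point: for all sufficiently small sizes, neither one-sided
  neighbourhood of z in the boundary curve is a line segment.  A one-sided neighbourhood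
  of z that is a segment is a segment [z,w] (w \<noteq> z) contained in the boundary; if F(A)
  is a single point, its one-sided neighbourhoods are the degenerate segment {z}.\<close>
definition fully_round :: "complex^'n^'n \<Rightarrow> complex \<Rightarrow> bool" where
  "fully_round A z \<longleftrightarrow> z \<in> frontier (numrange A) \<and> numrange A \<noteq> {z} \<and>
     (\<exists>e>0. \<forall>w \<in> frontier (numrange A). w \<noteq> z \<and> dist z w < e \<longrightarrow>
         \<not> closed_segment z w \<subseteq> frontier (numrange A))"

end

theory Submission
  imports Defs
begin

text \<open>Suppose \<open>x\<^sub>1, x\<^sub>2 \<in> f\<^sub>A\<^sup>-\<^sup>1(z)\<close> do not lie on a common complex line.  Unit vectors near
  \<open>x\<^sub>1\<close> and near \<open>x\<^sub>2\<close> then still do not lie on a common complex line, since they would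
  differ by a unimodular factor and \<open>x\<^sub>2\<close> has positive distance from the circle
  \<open>{c x\<^sub>1 | |c| = 1}\<close>.  Strong continuity at \<open>z\<close> would give, for every boundary point \<open>w\<close>
  close enough to \<open>z\<close>, preimages of \<open>w\<close> near \<open>x\<^sub>1\<close> and near \<open>x\<^sub>2\<close>, so \<open>w\<close> would be
  multiply generated.  Because \<open>F(A)\<close> is connected and not a single point, such \<open>w \<noteq> z\<close>
  exist arbitrarily close to \<open>z\<close>, contradicting isolation.\<close>

lemma continuous_on_qform: "continuous_on S (qform A)"
  unfolding qform_def[abs_def] matrix_vector_mult_def vec_lambda_beta
  by (intro continuous_on_sum continuous_on_mult continuous_on_cnj continuous_on_const
      linear_continuous_on bounded_linear_vec_nth)

lemma compact_numrange: "compact (numrange A)"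
  unfolding numrange_def csphere_def
  by (intro compact_continuous_image continuous_on_qform compact_sphere)

lemma connected_numrange: "connected (numrange (A::complex^'n^'n))"
proof -
  have "connected (sphere (0::complex^'n) 1)"
    by (rule connected_sphere) simp
  then show ?thesis
    unfolding numrange_def csphere_def
    by (intro connected_continuous_image continuous_on_qform)
qed

lemma norm_vector_smult: "norm (c *s (y::complex^'n)) = cmod c * norm y"
  unfolding norm_vec_def by (simp add: L2_set_right_distrib norm_mult)

lemma unit_vectors_on_line_unimodular:
  fixes v y\<^sub>1 y\<^sub>2 :: "complex^'n"
  assumes "y\<^sub>1 = a *s v" "y\<^sub>2 = b *s v" "norm y\<^sub>1 = 1" "norm y\<^sub>2 = 1"
  obtains c where "cmod c = 1" "y\<^sub>2 = c *s y\<^sub>1"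
proof
  have "a \<noteq> 0" using assms by auto
  then show "y\<^sub>2 = (b / a) *s y\<^sub>1" using assms(1,2) by simp
  then show "cmod (b / a) = 1" using assms(3,4) by (simp add: norm_vector_smult)
qed

lemma not_on_line_neighbourhoods:
  fixes x\<^sub>1 x\<^sub>2 :: "complex^'n"
  assumes "x\<^sub>2 \<notin> range (\<lambda>c. c *s x\<^sub>1)"
  obtains r where "r > 0"
    "\<And>y\<^sub>1 y\<^sub>2 c. y\<^sub>1 \<in> ball x\<^sub>1 r \<Longrightarrow> y\<^sub>2 \<in> ball x\<^sub>2 r \<Longrightarrow> cmod c = 1 \<Longrightarrow> y\<^sub>2 \<noteq> c *s y\<^sub>1"
proof -
  define K where "K = (\<lambda>c. c *s x\<^sub>1) ` sphere (0::complex) 1"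
  have "continuous_on UNIV (\<lambda>c::complex. c *s x\<^sub>1)"
    unfolding vector_scalar_mult_def by (intro continuous_on_vec_lambda continuous_intros)
  then have "compact K"
    unfolding K_def by (rule compact_continuous_image[OF continuous_on_subset compact_sphere]) auto
  moreover have "K \<noteq> {}"
    unfolding K_def using norm_one[where 'a=complex] by fastforce
  moreover have "x\<^sub>2 \<notin> K" using assms unfolding K_def by auto
  ultimately have d: "infdist x\<^sub>2 K > 0"
    by (intro infdist_pos_not_in_closed compact_imp_closed)
  show thesis
  proof
    show "infdist x\<^sub>2 K / 2 > 0" using d by simp
    fix y\<^sub>1 y\<^sub>2 c
    assume y: "y\<^sub>1 \<in> ball x\<^sub>1 (infdist x\<^sub>2 K / 2)" "y\<^sub>2 \<in> ball x\<^sub>2 (infdist x\<^sub>2 K / 2)"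
      and c: "cmod c = 1"
    show "y\<^sub>2 \<noteq> c *s y\<^sub>1"
    proof
      assume yc: "y\<^sub>2 = c *s y\<^sub>1"
      have "c *s x\<^sub>1 \<in> K" unfolding K_def using c by auto
      then have "infdist x\<^sub>2 K \<le> dist x\<^sub>2 (c *s x\<^sub>1)" by (rule infdist_le)
      also have "\<dots> \<le> dist x\<^sub>2 y\<^sub>2 + dist y\<^sub>2 (c *s x\<^sub>1)" by (rule dist_triangle)
      also have "dist y\<^sub>2 (c *s x\<^sub>1) = dist x\<^sub>1 y\<^sub>1"
        using c yc by (simp add: dist_norm norm_vector_smult norm_minus_commute
            flip: vector_ssub_ldistrib)
      finally show False using y by simp
    qed
  qed
qed

lemma frontier_points_near:
  fixes S :: "'a::euclidean_space set"
  assumes "DIM('a) \<ge> 2" "connected S" "closed S" "z \<in> frontier S" "S \<noteq> {z}" "d > 0"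
  obtains w where "w \<in> frontier S" "w \<noteq> z" "w \<in> ball z d"
proof -
  have zS: "z \<in> S" using assms frontier_subset_closed by blast
  have "z islimpt S"
    by (rule connected_imp_perfect[OF assms(2) zS]) (use zS assms(5) in auto)
  then obtain s where s: "s \<in> S" "s \<noteq> z" "dist s z < d"
    using assms(6) islimpt_approachable by blast
  have "z \<in> closure (- S)" using assms(4) by (simp add: frontier_def closure_complement)
  then obtain p where p: "p \<notin> S" "dist p z < d"
    using assms(6) closure_approachable by (metis ComplD)
  have "(ball z d - {z}) \<inter> frontier S \<noteq> {}"
  proof (rule connected_Int_frontier)
    show "connected (ball z d - {z})" using assms(1) by (intro connected_punctured_ball) auto
    have "s \<in> (ball z d - {z}) \<inter> S" using s by (simp add: dist_commute)
    then show "(ball z d - {z}) \<inter> S \<noteq> {}" by blast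
    have "p \<in> (ball z d - {z}) - S" using p zS by (auto simp: dist_commute)
    then show "(ball z d - {z}) - S \<noteq> {}" by blast
  qed
  then show thesis using that by (metis Diff_iff disjoint_iff singletonI)
qed

lemma strongly_continuous_inv_nearby_preimages:
  assumes "strongly_continuous_inv A z" "x \<in> fibre A z" "r > 0"
  obtains e where "e > 0" "\<And>w. w \<in> ball z e \<Longrightarrow> w \<in> numrange A \<Longrightarrow> \<exists>y \<in> ball x r. y \<in> fibre A w"
proof -
  obtain U where "open U" "z \<in> U" and U: "U \<inter> numrange A \<subseteq> qform A ` (ball x r \<inter> csphere)"
    using assms unfolding strongly_continuous_inv_def by (meson centre_in_ball open_ball)
  then obtain e where "e > 0" "ball z e \<subseteq> U" by (meson openE)
  with U show thesis
    by (intro that[of e]) (force simp: fibre_def)+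
qed

theorem theorem2:
  fixes A :: "complex^'n^'n" and z :: complex
  assumes "z \<in> frontier (numrange A)"
    and "isolated_multiply_generated A z"
    and "fully_round A z"
  shows "\<not> strongly_continuous_inv A z"
proof
  assume sc: "strongly_continuous_inv A z"
  obtain e\<^sub>0 where "e\<^sub>0 > 0" and mg: "multiply_generated A z"
    and iso: "\<And>w. w \<in> ball z e\<^sub>0 \<Longrightarrow> w \<noteq> z \<Longrightarrow> \<not> multiply_generated A w"
    using assms(2) unfolding isolated_multiply_generated_def by blast
  obtain x\<^sub>1 x\<^sub>2 where x: "x\<^sub>1 \<in> fibre A z" "x\<^sub>2 \<in> fibre A z" "x\<^sub>2 \<notin> range (\<lambda>c. c *s x\<^sub>1)"
    using mg unfolding multiply_generated_def by blast
  obtain r where "r > 0" and sep: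
    "\<And>y\<^sub>1 y\<^sub>2 c. y\<^sub>1 \<in> ball x\<^sub>1 r \<Longrightarrow> y\<^sub>2 \<in> ball x\<^sub>2 r \<Longrightarrow> cmod c = 1 \<Longrightarrow> y\<^sub>2 \<noteq> c *s y\<^sub>1"
    using not_on_line_neighbourhoods[OF x(3)] by blast
  obtain e\<^sub>1 e\<^sub>2 where "e\<^sub>1 > 0" "e\<^sub>2 > 0"
    and near: "\<And>w. w \<in> ball z e\<^sub>1 \<Longrightarrow> w \<in> numrange A \<Longrightarrow> \<exists>y \<in> ball x\<^sub>1 r. y \<in> fibre A w"
      "\<And>w. w \<in> ball z e\<^sub>2 \<Longrightarrow> w \<in> numrange A \<Longrightarrow> \<exists>y \<in> ball x\<^sub>2 r. y \<in> fibre A w"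
    using strongly_continuous_inv_nearby_preimages[OF sc x(1) \<open>r > 0\<close>]
      strongly_continuous_inv_nearby_preimages[OF sc x(2) \<open>r > 0\<close>] by metis
  define \<delta> where "\<delta> = min e\<^sub>0 (min e\<^sub>1 e\<^sub>2)"
  have closed: "closed (numrange A)" by (simp add: compact_numrange compact_imp_closed)
  have "numrange A \<noteq> {z}" using assms(3) unfolding fully_round_def by blast
  then obtain w where w: "w \<in> frontier (numrange A)" "w \<noteq> z" "w \<in> ball z \<delta>"
    using frontier_points_near[OF _ connected_numrange closed assms(1)]
      \<open>e\<^sub>0 > 0\<close> \<open>e\<^sub>1 > 0\<close> \<open>e\<^sub>2 > 0\<close> by (metis DIM_complex order_refl min_less_iff_conj \<delta>_def)
  have "w \<in> numrange A" using w(1) closed frontier_subset_closed by blast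
  then obtain y\<^sub>1 y\<^sub>2 where y: "y\<^sub>1 \<in> ball x\<^sub>1 r" "y\<^sub>1 \<in> fibre A w" "y\<^sub>2 \<in> ball x\<^sub>2 r" "y\<^sub>2 \<in> fibre A w"
    using near w(3) by (simp add: \<delta>_def) (meson mem_ball)
  have "\<not> multiply_generated A w" using iso w by (simp add: \<delta>_def)
  then obtain v a b where "y\<^sub>1 = a *s v" "y\<^sub>2 = b *s v"
    using w(1) y(2,4) unfolding multiply_generated_def by blast
  moreover have "norm y\<^sub>1 = 1" "norm y\<^sub>2 = 1" using y(2,4) by (auto simp: fibre_def csphere_def)
  ultimately obtain c where "cmod c = 1" "y\<^sub>2 = c *s y\<^sub>1"
    by (rule unit_vectors_on_line_unimodular)
  with sep y(1,3) show False by blast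
qed

end
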